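(* Let $S,T$ be spin systems, $\beta>0$, and $\mathcal f:S\to T$ a simulation with cut-off $\Delta>\max(H_T)$, degeneracy $d$ and $m=|\mathrm{enc}|$ encodings. Then $$\|p_{\mathcal f,\beta}-p_{T,\beta}\|<\frac{1}{md}\,q_S^{|V_S|}\,e^{-\beta(\Delta-\min(H_T))}.$$
   Context: A spin system $S=(q_S,V_S,E_S,J_S)$: integer $q_S\ge2$, finite set $V_S$, hyperedges $E_S\subseteq\mathcal P(V_S)$ covering $V_S$, $J_S(e):[q_S]^e\to\mathbb R_{\ge0}$. $\mathcal C_S=[q_S]^{V_S}$, $H_S(\vec s)=\sum_eJ_S(e)(\vec s|_e)$, $Z_S(\beta)=\sum_{\vec s}e^{-\beta H_S(\vec s)}$, Boltzmann distribution $p_{S,\beta}(\vec s)=e^{-\beta H_S(\vec s)}/Z_S(\beta)$. Total variation distance $\|p-q\|=\frac12\sum_x|p(x)-q(x)|$. A simulation $\mathcal f:S\to T$ consists of a cut-off $\Delta>0$, shift $\Gamma\in\mathbb R$, degeneracy $d\in\mathbb N$, $P:V_T\to V_S^k$ (components $P^{(i)}$), $\mathrm{dec}:[q_S]^k\to[q_T]$, and $\mathrm{enc}=(\mathrm{enc}_i:[q_T]\to[q_S]^k)_{i=1,\dots,m}$, satisfying: (1) $P^{(i)}(v)=P^{(j)}(w)\Rightarrow i=j,\ v=w$; (2) $\mathrm{dec}\circ\mathrm{enc}_i=\mathrm{id}$; (3) $\mathrm{enc}_i(t)=\mathrm{enc}_j(t)$ for some $t$ implies $i=j$; (4) with $\mathrm{sim}_i(\vec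 t)=\{\vec s\in\mathcal C_S:\vec s\circ P=\mathrm{enc}_i\circ\vec t,\ H_S(\vec s)-\Gamma<\Delta\}$, $|\mathrm{sim}_i(\vec t)|=d$ whenever $H_T(\vec t)<\Delta$; (5) $H_S(\vec s)-\Gamma=H_T(\vec t)$ for $\vec s\in\bigcup_i\mathrm{sim}_i(\vec t)$, and $H_S(\vec s)-\Gamma\ge\Delta$ for every $\vec s$ in no $\mathrm{sim}_i(\vec t)$. Here $(\vec s\circ P)(v)=(\vec s(P^{(1)}(v)),\dots,\vec s(P^{(k)}(v)))$, $(\mathrm{enc}_i\circ\vec t)(v)=\mathrm{enc}_i(\vec t(v))$, and $\mathrm{dec}\circ\vec s\circ P\in\mathcal C_T$. The simulation distribution is the probability distribution on $\mathcal C_T$ given by $p_{\mathcal f,\beta}(\vec t)=\sum_{\vec s\in\mathcal C_S:\ \mathrm{dec}\circ\vec s\circ P=\vec t}p_{S,\beta}(\vec s)$. *)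

theory Defs
  imports Main "HOL-Library.FuncSet" Complex_Main
begin

text \<open>Spin values [q] are represented as {..<q} (i.e. 0,...,q-1).
 Configurations are extensional functions V \<rightarrow> {..<q}; k-tuples are
 extensional functions {..<k} \<rightarrow> {..<q}.\<close>

record 'v spin_system =
  sq :: nat
  sV :: "'v set"
  sE :: "'v set set"
  sJ :: "'v set \<Rightarrow> ('v \<Rightarrow> nat) \<Rightarrow> real"

definition spin_system :: "'v spin_system \<Rightarrow> bool" where
  "spin_system S \<longleftrightarrow> sq S \<ge> 2 \<and> finite (sV S) \<and> sE S \<subseteq> Pow (sV S)
     \<and> \<Union>(sE S) = sV S
     \<and> (\<forall>e\<in>sE S. \<forall>x\<in>(e \<rightarrow>\<^sub>E {..<sq S}). sJ S e x \<ge> 0)"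

definition configs :: "'v spin_system \<Rightarrow> ('v \<Rightarrow> nat) set" where
  "configs S = sV S \<rightarrow>\<^sub>E {..<sq S}"

definition hamiltonian :: "'v spin_system \<Rightarrow> ('v \<Rightarrow> nat) \<Rightarrow> real" where
  "hamiltonian S s = (\<Sum>e\<in>sE S. sJ S e (restrict s e))"

definition partition_fn :: "'v spin_system \<Rightarrow> real \<Rightarrow> real" where
  "partition_fn S \<beta> = (\<Sum>s\<in>configs S. exp (- \<beta> * hamiltonian S s))"

definition boltzmann :: "'v spin_system \<Rightarrow> real \<Rightarrow> ('v \<Rightarrow> nat) \<Rightarrow> real" where
  "boltzmann S \<beta> s = exp (- \<beta> * hamiltonian S s) / partition_fn S \<beta>"

definition tv_dist :: "'x set \<Rightarrow> ('x \<Rightarrow> real) \<Rightarrow> ('x \<Rightarrow> real) \<Rightarrow> real" where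
  "tv_dist X p p' = (1/2) * (\<Sum>x\<in>X. \<bar>p x - p' x\<bar>)"

text \<open>A simulation f : S \<rightarrow> T. P v l is the l-th component P^(l)(v) (l < k);
 enc i is the (i+1)-th encoding (i < m).\<close>
record ('a, 'b) simulation =
  cutoff :: real
  shift :: real
  degen :: nat
  arity :: nat
  proj :: "'b \<Rightarrow> nat \<Rightarrow> 'a"
  dec :: "(nat \<Rightarrow> nat) \<Rightarrow> nat"
  nenc :: nat
  enc :: "nat \<Rightarrow> nat \<Rightarrow> (nat \<Rightarrow> nat)"

definition tuples :: "'a spin_system \<Rightarrow> ('a, 'b) simulation \<Rightarrow> (nat \<Rightarrow> nat) set" where
  "tuples S f = {..<arity f} \<rightarrow>\<^sub>E {..<sq S}"

definition compP :: "'b spin_system \<Rightarrow> ('a, 'b) simulation \<Rightarrow> ('a \<Rightarrow> nat) \<Rightarrow> ('b \<Rightarrow> (nat \<Rightarrow> nat))" where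
  "compP T f s = (\<lambda>v\<in>sV T. (\<lambda>l\<in>{..<arity f}. s (proj f v l)))"

definition simset :: "'a spin_system \<Rightarrow> 'b spin_system \<Rightarrow> ('a, 'b) simulation
    \<Rightarrow> nat \<Rightarrow> ('b \<Rightarrow> nat) \<Rightarrow> ('a \<Rightarrow> nat) set" where
  "simset S T f i t = {s\<in>configs S. compP T f s = (\<lambda>v\<in>sV T. enc f i (t v))
       \<and> hamiltonian S s - shift f < cutoff f}"

definition is_simulation :: "'a spin_system \<Rightarrow> 'b spin_system \<Rightarrow> ('a, 'b) simulation \<Rightarrow> bool" where
  "is_simulation S T f \<longleftrightarrow>
     cutoff f > 0 \<and> degen f \<ge> 1 \<and> nenc f \<ge> 1
   \<and> (\<forall>v\<in>sV T. \<forall>l<arity f. proj f v l \<in> sV S)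
   \<and> (\<forall>x\<in>tuples S f. dec f x < sq T)
   \<and> (\<forall>i<nenc f. \<forall>t<sq T. enc f i t \<in> tuples S f)
   \<and> (\<forall>v\<in>sV T. \<forall>w\<in>sV T. \<forall>i<arity f. \<forall>j<arity f.
        proj f v i = proj f w j \<longrightarrow> i = j \<and> v = w)
   \<and> (\<forall>i<nenc f. \<forall>t<sq T. dec f (enc f i t) = t)
   \<and> (\<forall>i<nenc f. \<forall>j<nenc f. \<forall>t<sq T. enc f i t = enc f j t \<longrightarrow> i = j)
   \<and> (\<forall>i<nenc f. \<forall>t\<in>configs T. hamiltonian T t < cutoff f
        \<longrightarrow> card (simset S T f i t) = degen f)
   \<and> (\<forall>i<nenc f. \<forall>t\<in>configs T. \<forall>s\<in>simset S T f i t.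
        hamiltonian S s - shift f = hamiltonian T t)
   \<and> (\<forall>s\<in>configs S. (\<forall>i<nenc f. \<forall>t\<in>configs T. s \<notin> simset S T f i t)
        \<longrightarrow> hamiltonian S s - shift f \<ge> cutoff f)"

definition decode :: "'b spin_system \<Rightarrow> ('a, 'b) simulation \<Rightarrow> ('a \<Rightarrow> nat) \<Rightarrow> ('b \<Rightarrow> nat)" where
  "decode T f s = (\<lambda>v\<in>sV T. dec f (compP T f s v))"

definition sim_dist :: "'a spin_system \<Rightarrow> 'b spin_system \<Rightarrow> ('a, 'b) simulation
    \<Rightarrow> real \<Rightarrow> ('b \<Rightarrow> nat) \<Rightarrow> real" where
  "sim_dist S T f \<beta> t = (\<Sum>s\<in>{s\<in>configs S. decode T f s = t}. boltzmann S \<beta> s)"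

end

theory Submission
  imports Defs
begin

text \<open>A configuration of S lying in some sim_i(t) decodes to t and has energy \<Gamma> + H_T(t).
  The m sets sim_1(t), ..., sim_m(t) are disjoint of size d, so these configurations push the
  weight m d exp(-\<beta>\<Gamma>) exp(-\<beta> H_T(t)) forward to t, proportionally to p_T. Hence p_f is a
  mixture of p_T and a remainder, at total variation distance from p_T at most the remainder
  weight over the good weight m d exp(-\<beta>\<Gamma>) Z_T \<ge> m d exp(-\<beta>\<Gamma>) exp(-\<beta> min H_T).
  Every remaining configuration has energy at least \<Gamma> + \<Delta>, and there are fewer than
  q_S^|V_S| of them since \<Delta> > max H_T makes some configuration simulating.\<close>

lemma sum_abs_mixture_diff_le:
  fixes h b :: "'y \<Rightarrow> real"
  assumes h_nonneg: "\<And>y. y \<in> Y \<Longrightarrow> h y \<ge> 0" and b_nonneg: "\<And>y. y \<in> Y \<Longrightarrow> b y \<ge> 0"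
    and K: "K > 0" and h_sum_pos: "sum h Y > 0"
  shows "(\<Sum>y\<in>Y. \<bar>(K * h y + b y) / (K * sum h Y + sum b Y) - h y / sum h Y\<bar>)
           \<le> 2 * sum b Y / (K * sum h Y + sum b Y)"
proof -
  define Z where "Z = sum h Y"
  define B where "B = sum b Y"
  have Z: "Z > 0" using h_sum_pos by (simp add: Z_def)
  have B: "B \<ge> 0" unfolding B_def using b_nonneg by (simp add: sum_nonneg)
  have W: "K * Z + B > 0" using K Z B by (simp add: add_pos_nonneg)
  have pointwise: "\<bar>(K * h y + b y) / (K * Z + B) - h y / Z\<bar> \<le> (b y + h y * B / Z) / (K * Z + B)"
    if "y \<in> Y" for y
  proof -
    have "(K * h y + b y) / (K * Z + B) - h y / Z = (b y - h y * B / Z) / (K * Z + B)"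
      using W Z by (simp add: field_simps)
    moreover have "\<bar>b y - h y * B / Z\<bar> \<le> b y + h y * B / Z"
      using b_nonneg[OF that] h_nonneg[OF that] B Z by (simp add: abs_le_iff)
    ultimately show ?thesis
      by (metis W abs_div_pos divide_right_mono less_imp_le)
  qed
  have "(\<Sum>y\<in>Y. \<bar>(K * h y + b y) / (K * Z + B) - h y / Z\<bar>) \<le> (\<Sum>y\<in>Y. (b y + h y * B / Z) / (K * Z + B))"
    by (rule sum_mono) (rule pointwise)
  also have "\<dots> = 2 * B / (K * Z + B)"
    using Z unfolding Z_def B_def
    by (simp add: sum_divide_distrib[symmetric] sum.distrib sum_distrib_right[symmetric])
  finally show ?thesis unfolding Z_def B_def .
qed

lemma tv_dist_pushforward_le:
  fixes w :: "'x \<Rightarrow> real" and h :: "'y \<Rightarrow> real"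
  assumes X: "finite X" and Y: "finite Y" and gXY: "g ` X \<subseteq> Y" and GX: "G \<subseteq> X"
    and w_nonneg: "\<And>x. x \<in> X \<Longrightarrow> w x \<ge> 0" and h_nonneg: "\<And>y. y \<in> Y \<Longrightarrow> h y \<ge> 0"
    and K: "K > 0" and h_sum_pos: "sum h Y > 0"
    and fibre: "\<And>y. y \<in> Y \<Longrightarrow> sum w {x\<in>G. g x = y} = K * h y"
  shows "tv_dist Y (\<lambda>y. sum w {x\<in>X. g x = y} / sum w X) (\<lambda>y. h y / sum h Y)
           \<le> sum w (X - G) / (K * sum h Y)"
proof -
  define b where "b y = sum w {x\<in>X - G. g x = y}" for y
  have G: "finite G" and gGY: "g ` G \<subseteq> Y"
    using finite_subset[OF GX X] GX gXY by auto
  have b_nonneg: "b y \<ge> 0" for y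
    unfolding b_def by (intro sum_nonneg w_nonneg) simp
  have sum_b: "sum b Y = sum w (X - G)"
    unfolding b_def using sum.group[of "X - G" Y g w] X Y gXY by blast
  have fibre_split: "sum w {x\<in>X. g x = y} = K * h y + b y" if "y \<in> Y" for y
  proof -
    have "sum w {x\<in>X. g x = y} = sum w ({x\<in>G. g x = y} \<union> {x\<in>X - G. g x = y})"
      using GX by (intro arg_cong[where f = "sum w"]) auto
    also have "\<dots> = K * h y + b y"
      unfolding b_def fibre[OF that, symmetric] by (rule sum.union_disjoint) (use G X in auto)
    finally show ?thesis .
  qed
  have "sum w G = (\<Sum>y\<in>Y. K * h y)"
    using sum.group[OF G Y gGY, of w] fibre by simp
  then have total: "sum w X = K * sum h Y + sum b Y"
    using sum.subset_diff[OF GX X, of w] by (simp add: sum_b sum_distrib_left)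
  have "(\<Sum>y\<in>Y. \<bar>sum w {x\<in>X. g x = y} / sum w X - h y / sum h Y\<bar>)
      \<le> 2 * sum b Y / (K * sum h Y + sum b Y)"
    unfolding total using sum_abs_mixture_diff_le[OF h_nonneg b_nonneg K h_sum_pos]
    by (simp add: fibre_split cong: sum.cong)
  also have "\<dots> \<le> 2 * (sum b Y / (K * sum h Y))"
    using K h_sum_pos sum_nonneg[of Y b] b_nonneg by (simp add: frac_le add_pos_nonneg)
  finally show ?thesis
    unfolding tv_dist_def sum_b by linarith
qed

lemma finite_configs: "spin_system S \<Longrightarrow> finite (configs S)"
  unfolding spin_system_def configs_def by (simp add: finite_PiE)

lemma configs_nonempty: "spin_system S \<Longrightarrow> configs S \<noteq> {}"
  unfolding spin_system_def configs_def by (auto simp: PiE_eq_empty_iff lessThan_empty_iff)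

lemma card_configs: "spin_system S \<Longrightarrow> card (configs S) = sq S ^ card (sV S)"
  unfolding spin_system_def configs_def by (simp add: card_PiE prod_constant)

lemma exp_Min_hamiltonian_le_partition_fn:
  assumes "spin_system T"
  shows "exp (- \<beta> * Min (hamiltonian T ` configs T)) \<le> partition_fn T \<beta>"
proof -
  have "Min (hamiltonian T ` configs T) \<in> hamiltonian T ` configs T"
    using finite_configs[OF assms] configs_nonempty[OF assms] by (intro Min_in) auto
  then obtain t where "t \<in> configs T" "Min (hamiltonian T ` configs T) = hamiltonian T t"
    by auto
  then show ?thesis
    unfolding partition_fn_def using finite_configs[OF assms] by (auto intro: member_le_sum)
qed

lemma hamiltonian_less_cutoff:
  assumes "spin_system T" "cutoff f > Max (hamiltonian T ` configs T)" "t \<in> configs T"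
  shows "hamiltonian T t < cutoff f"
  using assms finite_configs[OF assms(1)] by (meson Max_ge finite_imageI image_eqI le_less_trans)

lemma sim_dist_eq:
  "sim_dist S T f \<beta> t
     = (\<Sum>s\<in>{s\<in>configs S. decode T f s = t}. exp (- \<beta> * hamiltonian S s)) / partition_fn S \<beta>"
  unfolding sim_dist_def boltzmann_def by (simp add: sum_divide_distrib)

definition sim_configs :: "'a spin_system \<Rightarrow> 'b spin_system \<Rightarrow> ('a, 'b) simulation \<Rightarrow> ('a \<Rightarrow> nat) set" where
  "sim_configs S T f = (\<Union>i<nenc f. \<Union>t\<in>configs T. simset S T f i t)"

lemma simset_subset_configs: "simset S T f i t \<subseteq> configs S"
  unfolding simset_def by auto

lemma sim_configs_subset_configs: "sim_configs S T f \<subseteq> configs S"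
  unfolding sim_configs_def using simset_subset_configs by blast

lemma decode_in_configs:
  assumes sim: "is_simulation S T f" and s: "s \<in> configs S"
  shows "decode T f s \<in> configs T"
proof -
  have "compP T f s v \<in> tuples S f" if "v \<in> sV T" for v
    using s sim that unfolding is_simulation_def compP_def tuples_def configs_def by auto
  then show ?thesis
    using sim unfolding is_simulation_def decode_def configs_def by auto
qed

lemma decode_simset:
  assumes sim: "is_simulation S T f" and i: "i < nenc f" and t: "t \<in> configs T"
    and s: "s \<in> simset S T f i t"
  shows "decode T f s = t"
proof
  fix v
  show "decode T f s v = t v"
  proof (cases "v \<in> sV T")
    case True
    then have "compP T f s v = enc f i (t v)" and "t v < sq T"
      using s t unfolding simset_def configs_def by (auto dest: fun_cong[of _ _ v])
    then show ?thesis
      using sim i True unfolding is_simulation_def decode_def by auto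
  next
    case False
    then show ?thesis using t unfolding decode_def configs_def by auto
  qed
qed

lemma simset_disjoint:
  assumes sim: "is_simulation S T f" and "sV T \<noteq> {}" and t: "t \<in> configs T"
    and "i < nenc f" "j < nenc f" "i \<noteq> j"
  shows "simset S T f i t \<inter> simset S T f j t = {}"
proof (rule ccontr)
  obtain v where v: "v \<in> sV T" using \<open>sV T \<noteq> {}\<close> by auto
  assume "simset S T f i t \<inter> simset S T f j t \<noteq> {}"
  then have "(\<lambda>v\<in>sV T. enc f i (t v)) = (\<lambda>v\<in>sV T. enc f j (t v))"
    unfolding simset_def by auto
  then have "enc f i (t v) = enc f j (t v)" using v by (auto dest: fun_cong[of _ _ v])
  moreover have "t v < sq T" using t v unfolding configs_def by auto
  ultimately show False using sim assms(4-6) unfolding is_simulation_def by blast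
qed

lemma sim_configs_decode_fibre:
  assumes sim: "is_simulation S T f" and t: "t \<in> configs T"
  shows "{s\<in>sim_configs S T f. decode T f s = t} = (\<Union>i<nenc f. simset S T f i t)"
  using decode_simset[OF sim] t unfolding sim_configs_def by blast

lemma sum_exp_simset:
  assumes sim: "is_simulation S T f" and i: "i < nenc f" and t: "t \<in> configs T"
    and low: "hamiltonian T t < cutoff f"
  shows "(\<Sum>s\<in>simset S T f i t. exp (- \<beta> * hamiltonian S s))
           = real (degen f) * exp (- \<beta> * shift f) * exp (- \<beta> * hamiltonian T t)"
proof -
  have "hamiltonian S s = shift f + hamiltonian T t" if "s \<in> simset S T f i t" for s
    using sim i t that unfolding is_simulation_def by force
  then have "(\<Sum>s\<in>simset S T f i t. exp (- \<beta> * hamiltonian S s))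
      = (\<Sum>s\<in>simset S T f i t. exp (- \<beta> * shift f) * exp (- \<beta> * hamiltonian T t))"
    by (simp add: distrib_left exp_add[symmetric])
  moreover have "card (simset S T f i t) = degen f"
    using sim i t low unfolding is_simulation_def by blast
  ultimately show ?thesis by simp
qed

lemma sum_exp_sim_configs_fibre:
  assumes S: "spin_system S" and sim: "is_simulation S T f" and "sV T \<noteq> {}"
    and t: "t \<in> configs T" and low: "hamiltonian T t < cutoff f"
  shows "(\<Sum>s\<in>{s\<in>sim_configs S T f. decode T f s = t}. exp (- \<beta> * hamiltonian S s))
           = real (nenc f) * real (degen f) * exp (- \<beta> * shift f) * exp (- \<beta> * hamiltonian T t)"
proof -
  have "finite (simset S T f i t)" for i
    using finite_subset[OF simset_subset_configs finite_configs[OF S]] .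
  then have "(\<Sum>s\<in>{s\<in>sim_configs S T f. decode T f s = t}. exp (- \<beta> * hamiltonian S s))
      = (\<Sum>i<nenc f. \<Sum>s\<in>simset S T f i t. exp (- \<beta> * hamiltonian S s))"
    unfolding sim_configs_decode_fibre[OF sim t]
    using simset_disjoint[OF sim \<open>sV T \<noteq> {}\<close> t] by (intro sum.UNION_disjoint) auto
  also have "\<dots> = (\<Sum>i<nenc f. real (degen f) * exp (- \<beta> * shift f) * exp (- \<beta> * hamiltonian T t))"
    using sum_exp_simset[OF sim _ t low] by (intro sum.cong) simp_all
  finally show ?thesis by simp
qed

lemma exp_energy_outside_sim_configs:
  assumes sim: "is_simulation S T f" and "\<beta> \<ge> 0" and s: "s \<in> configs S - sim_configs S T f"
  shows "exp (- \<beta> * hamiltonian S s) \<le> exp (- \<beta> * (shift f + cutoff f))"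
proof -
  have high: "\<forall>s\<in>configs S. (\<forall>i<nenc f. \<forall>t\<in>configs T. s \<notin> simset S T f i t)
      \<longrightarrow> hamiltonian S s - shift f \<ge> cutoff f"
    using sim unfolding is_simulation_def by blast
  have "\<forall>i<nenc f. \<forall>t\<in>configs T. s \<notin> simset S T f i t"
    using s unfolding sim_configs_def by blast
  then have "hamiltonian S s \<ge> shift f + cutoff f"
    using high s by force
  then show ?thesis using \<open>\<beta> \<ge> 0\<close> by (simp add: mult_left_mono)
qed

lemma sim_configs_nonempty:
  assumes T: "spin_system T" and sim: "is_simulation S T f"
    and cut: "cutoff f > Max (hamiltonian T ` configs T)"
  shows "sim_configs S T f \<noteq> {}"
proof -
  obtain t where t: "t \<in> configs T" using configs_nonempty[OF T] by auto
  have "card (simset S T f 0 t) = degen f" "degen f \<ge> 1" "nenc f \<ge> 1"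
    using sim t hamiltonian_less_cutoff[OF T cut t] unfolding is_simulation_def by auto
  then have "simset S T f 0 t \<noteq> {}" and "0 < nenc f" by auto
  then show ?thesis
    unfolding sim_configs_def using t by blast
qed

lemma sum_exp_outside_sim_configs_less:
  assumes S: "spin_system S" and T: "spin_system T" and sim: "is_simulation S T f"
    and cut: "cutoff f > Max (hamiltonian T ` configs T)" and "\<beta> \<ge> 0"
  shows "(\<Sum>s\<in>configs S - sim_configs S T f. exp (- \<beta> * hamiltonian S s))
           < real (sq S) ^ card (sV S) * exp (- \<beta> * (shift f + cutoff f))"
proof -
  have "card (configs S - sim_configs S T f) < card (configs S)"
    using sim_configs_nonempty[OF T sim cut] sim_configs_subset_configs[of S T f] finite_configs[OF S]
    by (intro psubset_card_mono) auto
  then have card_less: "real (card (configs S - sim_configs S T f)) < real (sq S) ^ card (sV S)"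
    unfolding card_configs[OF S] by (simp flip: of_nat_power)
  have "(\<Sum>s\<in>configs S - sim_configs S T f. exp (- \<beta> * hamiltonian S s))
      \<le> real (card (configs S - sim_configs S T f)) * exp (- \<beta> * (shift f + cutoff f))"
    using exp_energy_outside_sim_configs[OF sim \<open>\<beta> \<ge> 0\<close>] by (rule sum_bounded_above)
  also have "\<dots> < real (sq S) ^ card (sV S) * exp (- \<beta> * (shift f + cutoff f))"
    using card_less by simp
  finally show ?thesis .
qed

lemma tv_dist_sim_dist_le:
  assumes S: "spin_system S" and T: "spin_system T" and sim: "is_simulation S T f"
    and cut: "cutoff f > Max (hamiltonian T ` configs T)" and "sV T \<noteq> {}"
  shows "tv_dist (configs T) (sim_dist S T f \<beta>) (boltzmann T \<beta>)
    \<le> (\<Sum>s\<in>configs S - sim_configs S T f. exp (- \<beta> * hamiltonian S s))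
        / (real (nenc f) * real (degen f) * exp (- \<beta> * shift f) * partition_fn T \<beta>)"
proof -
  let ?w = "\<lambda>s. exp (- \<beta> * hamiltonian S s)" and ?h = "\<lambda>t. exp (- \<beta> * hamiltonian T t)"
  have "nenc f \<ge> 1" "degen f \<ge> 1" using sim unfolding is_simulation_def by auto
  then have K: "real (nenc f) * real (degen f) * exp (- \<beta> * shift f) > 0" by simp
  have Z: "sum ?h (configs T) > 0"
    using finite_configs[OF T] configs_nonempty[OF T] by (intro sum_pos) auto
  have "sim_dist S T f \<beta> = (\<lambda>t. sum ?w {s\<in>configs S. decode T f s = t} / sum ?w (configs S))"
    and "boltzmann T \<beta> = (\<lambda>t. ?h t / sum ?h (configs T))"
    by (simp_all add: fun_eq_iff sim_dist_eq boltzmann_def partition_fn_def)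
  moreover have "tv_dist (configs T)
      (\<lambda>t. sum ?w {s\<in>configs S. decode T f s = t} / sum ?w (configs S))
      (\<lambda>t. ?h t / sum ?h (configs T))
    \<le> sum ?w (configs S - sim_configs S T f)
        / (real (nenc f) * real (degen f) * exp (- \<beta> * shift f) * sum ?h (configs T))"
  proof (rule tv_dist_pushforward_le[OF finite_configs[OF S] finite_configs[OF T] _
        sim_configs_subset_configs _ _ K Z])
    show "decode T f ` configs S \<subseteq> configs T"
      using decode_in_configs[OF sim] by auto
    show "sum ?w {s\<in>sim_configs S T f. decode T f s = t}
        = real (nenc f) * real (degen f) * exp (- \<beta> * shift f) * ?h t" if "t \<in> configs T" for t
      using sum_exp_sim_configs_fibre[OF S sim \<open>sV T \<noteq> {}\<close> that hamiltonian_less_cutoff[OF T cut that]] .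
  qed simp_all
  ultimately show ?thesis unfolding partition_fn_def by simp
qed

text \<open>For empty V_T all sim_i(t) coincide and the fibre count m d fails; but then C_T is a
  singleton and both distributions are the point mass.\<close>

lemma tv_dist_sim_dist_no_vertices:
  assumes S: "spin_system S" and "sV T = {}"
  shows "tv_dist (configs T) (sim_dist S T f \<beta>) (boltzmann T \<beta>) = 0"
proof -
  define t0 :: "'b \<Rightarrow> nat" where "t0 = (\<lambda>_. undefined)"
  have configs_T: "configs T = {t0}" and decode: "decode T f s = t0" for s
    unfolding configs_def decode_def t0_def \<open>sV T = {}\<close> by auto
  have "partition_fn S \<beta> > 0"
    unfolding partition_fn_def using finite_configs[OF S] configs_nonempty[OF S] by (intro sum_pos) auto
  then have "sim_dist S T f \<beta> t0 = 1"
    unfolding sim_dist_eq decode partition_fn_def by simp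
  moreover have "boltzmann T \<beta> t0 = 1"
    unfolding boltzmann_def partition_fn_def configs_T by simp
  ultimately show ?thesis unfolding tv_dist_def configs_T by simp
qed

lemma tv_dist_sim_dist_less:
  assumes S: "spin_system S" and T: "spin_system T" and "\<beta> \<ge> 0" and sim: "is_simulation S T f"
    and cut: "cutoff f > Max (hamiltonian T ` configs T)" and "sV T \<noteq> {}"
  shows "tv_dist (configs T) (sim_dist S T f \<beta>) (boltzmann T \<beta>)
     < 1 / (real (nenc f) * real (degen f)) * real (sq S) ^ card (sV S)
       * exp (- \<beta> * (cutoff f - Min (hamiltonian T ` configs T)))"
proof -
  define K where "K = real (nenc f) * real (degen f) * exp (- \<beta> * shift f)"
  define bad where "bad = (\<Sum>s\<in>configs S - sim_configs S T f. exp (- \<beta> * hamiltonian S s))"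
  define E_min where "E_min = exp (- \<beta> * Min (hamiltonian T ` configs T))"
  have "nenc f \<ge> 1" "degen f \<ge> 1" using sim unfolding is_simulation_def by auto
  then have K: "K > 0" unfolding K_def by simp
  have E_min: "E_min > 0" "E_min \<le> partition_fn T \<beta>"
    unfolding E_min_def using exp_Min_hamiltonian_le_partition_fn[OF T] by simp_all
  have "tv_dist (configs T) (sim_dist S T f \<beta>) (boltzmann T \<beta>) \<le> bad / (K * partition_fn T \<beta>)"
    unfolding bad_def K_def using tv_dist_sim_dist_le[OF S T sim cut \<open>sV T \<noteq> {}\<close>] .
  also have "\<dots> \<le> bad / (K * E_min)"
    unfolding bad_def using K E_min
    by (intro divide_left_mono mult_left_mono mult_pos_pos sum_nonneg) auto
  also have "\<dots> < real (sq S) ^ card (sV S) * exp (- \<beta> * (shift f + cutoff f)) / (K * E_min)"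
    unfolding bad_def using K E_min sum_exp_outside_sim_configs_less[OF S T sim cut \<open>\<beta> \<ge> 0\<close>]
    by (intro divide_strict_right_mono) auto
  also have "exp (- \<beta> * (shift f + cutoff f))
      = exp (- \<beta> * shift f) * E_min * exp (- \<beta> * (cutoff f - Min (hamiltonian T ` configs T)))"
    unfolding E_min_def by (simp add: algebra_simps flip: exp_add)
  finally show ?thesis
    unfolding K_def using E_min(1) by (simp add: field_simps)
qed

theorem mainTheorem14:
  fixes S :: "'a spin_system" and T :: "'b spin_system"
    and f :: "('a, 'b) simulation" and \<beta> :: real
  assumes "spin_system S" and "spin_system T" and "\<beta> > 0"
    and "is_simulation S T f"
    and "cutoff f > Max (hamiltonian T ` configs T)"
  shows "tv_dist (configs T) (sim_dist S T f \<beta>) (boltzmann T \<beta>)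
     < 1 / (real (nenc f) * real (degen f)) * real (sq S) ^ card (sV S)
       * exp (- \<beta> * (cutoff f - Min (hamiltonian T ` configs T)))"
proof (cases "sV T = {}")
  case True
  have "nenc f \<ge> 1" "degen f \<ge> 1" "sq S \<ge> 2"
    using assms(1,4) unfolding is_simulation_def spin_system_def by auto
  then show ?thesis
    using tv_dist_sim_dist_no_vertices[OF assms(1) True] by simp
next
  case False
  then show ?thesis
    using tv_dist_sim_dist_less[OF assms(1,2) _ assms(4,5)] assms(3) by simp
qed

end
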